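(* Let $n\in\mathbb{Z}^+$, $v\in\mathbb{N}$ and $z\in\mathbb{Z}\setminus\{0,-1\}$. Define $c_0=\tilde c_0=1$ and, for $v\ge 1$, recursively $$c_v=\frac{1}{z}\sum_{j=1}^{v}e_j^{(2v-1)}c_{v-j},\qquad \tilde c_v=-\frac{1}{z+1}\sum_{j=1}^{v}e_j^{(2v-1)}\tilde c_{v-j}.$$ Then $c_v\in z^{-v}\mathbb{Z}[z]$ and $\tilde c_v\in (z+1)^{-v}\mathbb{Z}[z]$. Moreover, if $\gcd(n,2z)=1$ then $$\sum_{k=0}^{n-1}(2k+1)^{2v}D_k(z)\equiv c_v\sum_{k=0}^{n-1}D_k(z)\pmod n,$$ and if $\gcd(n,2(z+1))=1$ then $$\sum_{k=0}^{n-1}(-1)^k(2k+1)^{2v}D_k(z)\equiv \tilde c_v\sum_{k=0}^{n-1}(-1)^kD_k(z)\pmod n.$$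
   Context: The Delannoy polynomials are $D_n(z)=\sum_{k=0}^{n}\binom{n}{k}\binom{n+k}{k}z^k$ for $n\in\mathbb{N}$. For $s\in\mathbb{N}$ and $j=1,2,\dots,\lfloor (s+1)/2\rfloor$, set $e_j^{(s)}=\binom{s}{2j}2^{2j-1}+\binom{s}{2j-1}2^{2j-2}\in\mathbb{Z}$. Congruences involving rational numbers are understood in the usual way: for a rational $a/b$ with $\gcd(b,n)=1$, $a/b\equiv c\pmod n$ means $a\equiv bc\pmod n$ (here the denominators of $c_v$, resp. $\tilde c_v$, evaluated at the integer $z$, divide a power of $z$, resp. $z+1$, hence are coprime to $n$ under the stated hypotheses). *)

theory Defs
  imports Complex_Main "HOL-Computational_Algebra.Polynomial" "HOL-Number_Theory.Number_Theory"
begin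

definition delannoy :: "nat \<Rightarrow> int \<Rightarrow> int" where
  "delannoy n z = (\<Sum>k=0..n. int (n choose k) * int ((n + k) choose k) * z ^ k)"

definition ecoef :: "nat \<Rightarrow> nat \<Rightarrow> int" where
  "ecoef s j = int (s choose (2*j)) * 2 ^ (2*j - 1) + int (s choose (2*j - 1)) * 2 ^ (2*j - 2)"

fun cseq :: "rat \<Rightarrow> nat \<Rightarrow> rat" where
  "cseq z 0 = 1"
| "cseq z (Suc m) = (1 / z) *
     (\<Sum>j\<in>{1..Suc m}. of_int (ecoef (2 * Suc m - 1) j) * cseq z (Suc m - j))"

fun ctseq :: "rat \<Rightarrow> nat \<Rightarrow> rat" where
  "ctseq z 0 = 1"
| "ctseq z (Suc m) = - (1 / (z + 1)) *
     (\<Sum>j\<in>{1..Suc m}. of_int (ecoef (2 * Suc m - 1) j) * ctseq z (Suc m - j))"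

text \<open>Congruence of rationals modulo an integer n: x == y (mod n) iff
  b*(x - y) is an integer divisible by n for some b coprime to n
  (equivalently: the reduced denominator of x - y is coprime to n and n divides its numerator).\<close>
definition rat_cong :: "rat \<Rightarrow> rat \<Rightarrow> int \<Rightarrow> bool" where
  "rat_cong x y n \<longleftrightarrow> (\<exists>b a :: int. coprime b n \<and> of_int b * (x - y) = of_int a \<and> n dvd a)"

end

theory Submission
  imports Defs
begin

text \<open>The Delannoy polynomials satisfy the three-term recurrence
  (k+1) D_{k+1} + k D_{k-1} = (2k+1)(2z+1) D_k, so summing D_k against
  k h(k-1) + (k+1) h(k+1) - (2k+1)(2z+1) h(k) telescopes to a multiple of n, for any h.
  For h(k) = \<sigma>^k (2k+1)^{2m+1} with \<sigma> = 1 or \<sigma> = -1 the binomial theorem expresses this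
  combination through the numbers e_j^{(2m+1)}, so that the moments
  M_w = \<Sum>_{k<n} \<sigma>^k (2k+1)^{2w} D_k(z) satisfy t M_{m+1} \<equiv> \<Sum>_j e_j M_{m+1-j} (mod n),
  where t = z for \<sigma> = 1 and t = -(z+1) for \<sigma> = -1 (n is odd, so the factor 2 cancels).
  Iterating gives t^v M_v \<equiv> N_v(t) M_0 for the integer polynomial N_v with c_v = N_v(z)/z^v, and
  since the recursion defining the alternating constants is that of c_v at -(z+1), the same
  N_v serves both cases.\<close>

definition delannoy_coeff :: "nat \<Rightarrow> nat \<Rightarrow> int" where
  "delannoy_coeff n k = int (n choose k) * int ((n + k) choose k)"

lemma delannoy_eq_sum_atMost:
  assumes "n \<le> N"
  shows "delannoy n z = (\<Sum>k\<le>N. delannoy_coeff n k * z ^ k)"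
proof -
  have "delannoy n z = (\<Sum>k\<le>n. delannoy_coeff n k * z ^ k)"
    by (simp add: delannoy_def delannoy_coeff_def atLeast0AtMost)
  also have "\<dots> = (\<Sum>k\<le>N. delannoy_coeff n k * z ^ k)"
    using assms by (intro sum.mono_neutral_left) (auto simp: delannoy_coeff_def)
  finally show ?thesis .
qed

lemma delannoy_coeff_0 [simp]: "delannoy_coeff n 0 = 1"
  by (simp add: delannoy_coeff_def)

lemma delannoy_coeff_pochhammer:
  "real_of_int (delannoy_coeff n k) = pochhammer (real n - real k + 1) (2 * k) / fact k ^ 2"
proof -
  have "real (n choose k) = pochhammer (real n - real k + 1) k / fact k"
    by (simp add: binomial_gbinomial gbinomial_pochhammer')
  moreover have "real ((n + k) choose k) = pochhammer (real n + 1) k / fact k"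
    by (simp add: binomial_gbinomial gbinomial_pochhammer')
  moreover have "pochhammer (real n - real k + 1) (2 * k)
      = pochhammer (real n - real k + 1) k * pochhammer (real n + 1) k"
    using pochhammer_product'[of "real n - real k + 1" k k] by (simp add: mult_2)
  ultimately show ?thesis
    by (simp add: delannoy_coeff_def power2_eq_square)
qed

lemma delannoy_coeff_Suc_pochhammer:
  "real_of_int (delannoy_coeff n (j + 1))
     = pochhammer (real n - real j) (Suc (Suc (2 * j))) / ((real j + 1) ^ 2 * fact j ^ 2)"
proof -
  have "(fact (j + 1) :: real) = (real j + 1) * fact j"
    by simp
  then have "(fact (j + 1) :: real) ^ 2 = (real j + 1) ^ 2 * fact j ^ 2"
    by (simp only: power_mult_distrib)
  moreover have "real n - real (j + 1) + 1 = real n - real j" "2 * (j + 1) = Suc (Suc (2 * j))"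
    by simp_all
  ultimately show ?thesis
    by (simp only: delannoy_coeff_pochhammer)
qed

lemma delannoy_coeff_rec:
  "int (k + 1) * delannoy_coeff (k + 1) (j + 1) + int k * delannoy_coeff (k - 1) (j + 1)
     = int (2 * k + 1) * (delannoy_coeff k (j + 1) + 2 * delannoy_coeff k j)"
proof -
  \<comment> \<open>All four coefficients are polynomial multiples of one quantity Q, which reduces the
    claim to a polynomial identity in k and j.\<close>
  define P where "P = pochhammer (real k - real j + 1) (2 * j)"
  define Q where "Q = P / ((real j + 1) ^ 2 * fact j ^ 2)"
  note coeff_Suc = delannoy_coeff_Suc_pochhammer
  have coeff_up: "real_of_int (delannoy_coeff (k + 1) (j + 1)) = (real k + real j + 1) * (real k + real j + 2) * Q"
  proof -
    have "pochhammer (real (k + 1) - real j) (Suc (Suc (2 * j)))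
        = (real k + real j + 2) * ((real k + real j + 1) * P)"
      unfolding pochhammer_rec' P_def by (simp add: algebra_simps)
    then show ?thesis
      unfolding coeff_Suc Q_def by simp
  qed
  have coeff_down: "real k * real_of_int (delannoy_coeff (k - 1) (j + 1))
      = real k * ((real k - real j - 1) * (real k - real j) * Q)"
  proof (cases k)
    case (Suc i)
    have "pochhammer (real i - real j) (Suc (Suc (2 * j)))
        = (real k - real j - 1) * ((real k - real j) * P)"
      unfolding pochhammer_rec P_def using Suc by (simp add: algebra_simps)
    then show ?thesis
      using Suc unfolding coeff_Suc Q_def by simp
  qed simp
  have coeff_same: "real_of_int (delannoy_coeff k (j + 1)) = (real k - real j) * (real k + real j + 1) * Q"
  proof -
    have "pochhammer (real k - real j) (Suc (Suc (2 * j)))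
        = (real k - real j) * ((real k + real j + 1) * P)"
      unfolding pochhammer_rec[of _ "Suc (2 * j)"] pochhammer_rec'[of _ "2 * j"] P_def by (simp add: algebra_simps)
    then show ?thesis
      unfolding coeff_Suc Q_def by simp
  qed
  have coeff_left: "real_of_int (delannoy_coeff k j) = (real j + 1) ^ 2 * Q"
    by (simp add: delannoy_coeff_pochhammer P_def Q_def)
  have "real_of_int (int (k + 1) * delannoy_coeff (k + 1) (j + 1) + int k * delannoy_coeff (k - 1) (j + 1))
      = (real k + 1) * real_of_int (delannoy_coeff (k + 1) (j + 1))
        + real k * real_of_int (delannoy_coeff (k - 1) (j + 1))"
    by simp
  also have "\<dots> = Q * ((real k + 1) * (real k + real j + 1) * (real k + real j + 2)
                     + real k * (real k - real j - 1) * (real k - real j))"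
    unfolding coeff_up coeff_down by (simp add: algebra_simps)
  also have "\<dots> = Q * ((2 * real k + 1) * ((real k - real j) * (real k + real j + 1) + 2 * (real j + 1) ^ 2))"
    by (simp add: algebra_simps power2_eq_square)
  also have "\<dots> = real_of_int (int (2 * k + 1) * (delannoy_coeff k (j + 1) + 2 * delannoy_coeff k j))"
    unfolding of_int_mult of_int_add coeff_same coeff_left by (simp add: algebra_simps)
  finally show ?thesis
    by (simp only: of_int_eq_iff)
qed

lemma delannoy_rec:
  "int (k + 1) * delannoy (k + 1) z + int k * delannoy (k - 1) z
     = int (2 * k + 1) * (2 * z + 1) * delannoy k z"
proof -
  let ?c = delannoy_coeff
  have shift: "(\<Sum>j\<le>Suc k. f j) = f 0 + (\<Sum>j\<le>k. f (j + 1))" for f :: "nat \<Rightarrow> int"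
    unfolding sum.atMost_Suc_shift by simp
  have "int (k + 1) * delannoy (k + 1) z + int k * delannoy (k - 1) z
      = (\<Sum>j\<le>Suc k. (int (k + 1) * ?c (k + 1) j + int k * ?c (k - 1) j) * z ^ j)"
    by (simp add: delannoy_eq_sum_atMost[of _ "Suc k"] sum_distrib_left sum.distrib algebra_simps)
  also have "\<dots> = int (2 * k + 1)
      + (\<Sum>j\<le>k. (int (k + 1) * ?c (k + 1) (j + 1) + int k * ?c (k - 1) (j + 1)) * z ^ (j + 1))"
    unfolding shift by simp
  also have "\<dots> = int (2 * k + 1)
      * ((1 + (\<Sum>j\<le>k. ?c k (j + 1) * z ^ (j + 1))) + 2 * z * (\<Sum>j\<le>k. ?c k j * z ^ j))"
    by (simp only: delannoy_coeff_rec) (simp add: sum_distrib_left sum.distrib algebra_simps)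
  also have "\<dots> = int (2 * k + 1) * (2 * z + 1) * delannoy k z"
  proof -
    have high: "delannoy k z = 1 + (\<Sum>j\<le>k. ?c k (j + 1) * z ^ (j + 1))"
      unfolding delannoy_eq_sum_atMost[of _ "Suc k", OF le_SucI[OF order_refl]] shift by simp
    have low: "delannoy k z = (\<Sum>j\<le>k. ?c k j * z ^ j)"
      by (rule delannoy_eq_sum_atMost[OF order_refl])
    show ?thesis
      unfolding high[symmetric] low[symmetric] by (simp add: algebra_simps)
  qed
  finally show ?thesis .
qed

lemma three_term_recurrence_summation:
  fixes d h :: "nat \<Rightarrow> 'a::comm_ring_1"
  assumes rec: "\<And>k. of_nat (k + 1) * d (k + 1) + of_nat k * d (k - 1) = of_nat (2 * k + 1) * c * d k"
  shows "(\<Sum>k<n. d k * (of_nat k * h (k - 1) + of_nat (k + 1) * h (k + 1) - of_nat (2 * k + 1) * c * h k))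
           = of_nat n * (h n * d (n - 1) - h (n - 1) * d n)"
proof (induction n)
  case (Suc n)
  have step: "of_nat (n + 1) * d (n + 1) = of_nat (2 * n + 1) * c * d n - of_nat n * d (n - 1)"
    using rec[of n] by (simp add: algebra_simps)
  have "of_nat (n + 1) * (h (n + 1) * d n - h n * d (n + 1))
      = of_nat (n + 1) * h (n + 1) * d n - h n * (of_nat (n + 1) * d (n + 1))"
    by (simp add: algebra_simps)
  also have "\<dots> = of_nat (n + 1) * h (n + 1) * d n
      - h n * (of_nat (2 * n + 1) * c * d n - of_nat n * d (n - 1))"
    by (simp only: step)
  also have "\<dots> = of_nat n * (h n * d (n - 1) - h (n - 1) * d n)
      + d n * (of_nat n * h (n - 1) + of_nat (n + 1) * h (n + 1) - of_nat (2 * n + 1) * c * h n)"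
    by (simp add: algebra_simps)
  finally show ?case
    using Suc.IH by simp
qed simp

lemma sum_atMost_double_pairs:
  fixes f :: "nat \<Rightarrow> 'a::comm_monoid_add"
  shows "(\<Sum>i\<le>2 * v. f i) = f 0 + (\<Sum>j=1..v. f (2 * j - 1) + f (2 * j))"
  by (induction v) (simp_all add: ac_simps)

lemma shifted_binomial_sum:
  fixes u :: "'a::comm_ring_1"
  shows "(u - 1) * (u - 2) ^ s + (u + 1) * (u + 2) ^ s
           = 2 * u ^ (s + 1) + 4 * (\<Sum>j=1..(s + 1) div 2. of_int (ecoef s j) * u ^ (s + 1 - 2 * j))"
proof -
  define v where "v = (s + 1) div 2"
  define f where "f i = of_nat (s choose i) * 2 ^ i * ((u + 1) + (-1) ^ i * (u - 1)) * u ^ (s - i)" for i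
  have "(u - 1) * (u - 2) ^ s + (u + 1) * (u + 2) ^ s = (\<Sum>i\<le>s. f i)"
  proof -
    have "(u - 2) ^ s = (\<Sum>i\<le>s. of_nat (s choose i) * ((-1) ^ i * 2 ^ i) * u ^ (s - i))"
      using binomial_ring[of "-2" u s] by (simp add: power_minus')
    moreover have "(u + 2) ^ s = (\<Sum>i\<le>s. of_nat (s choose i) * 2 ^ i * u ^ (s - i))"
      using binomial_ring[of 2 u s] by (simp add: add.commute)
    ultimately show ?thesis
      by (simp add: f_def sum_distrib_left sum.distrib[symmetric] algebra_simps)
  qed
  also have "\<dots> = (\<Sum>i\<le>2 * v. f i)"
  proof (rule sum.mono_neutral_left)
    show "\<forall>i\<in>{..2 * v} - {..s}. f i = 0"
      by (simp add: f_def binomial_eq_0)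
  qed (auto simp: v_def)
  also have "\<dots> = f 0 + (\<Sum>j=1..v. f (2 * j - 1) + f (2 * j))"
    by (rule sum_atMost_double_pairs)
  also have "\<dots> = 2 * u ^ (s + 1) + 4 * (\<Sum>j=1..v. of_int (ecoef s j) * u ^ (s + 1 - 2 * j))"
  proof -
    have pair: "f (2 * j - 1) + f (2 * j) = 4 * (of_int (ecoef s j) * u ^ (s + 1 - 2 * j))"
      if j_range: "j \<in> {1..v}" for j
    proof -
      obtain i where j: "j = Suc i"
        using j_range by (cases j) auto
      define U where "U = u ^ (s - (2 * i + 1))"
      have odd_term: "f (2 * j - 1) = of_nat (s choose (2 * i + 1)) * (4 * 2 ^ (2 * i)) * U"
        by (simp add: j f_def U_def)
      have even_term: "f (2 * j) = of_nat (s choose (2 * i + 2)) * (4 * 2 ^ (2 * i + 1)) * U"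
      proof (cases "2 * i + 2 \<le> s")
        case True
        then have "s - (2 * i + 1) = Suc (s - (2 * i + 2))"
          by arith
        then have U_eq: "U = u * u ^ (s - (2 * i + 2))"
          unfolding U_def by simp
        show ?thesis
          unfolding j f_def U_eq by (simp add: algebra_simps)
      qed (simp add: j f_def binomial_eq_0)
      have ecoef_eq: "of_int (ecoef s j) = of_nat (s choose (2 * i + 2)) * 2 ^ (2 * i + 1)
                                  + of_nat (s choose (2 * i + 1)) * (2 ^ (2 * i) :: 'a)"
        by (simp add: j ecoef_def)
      have "u ^ (s + 1 - 2 * j) = U"
        by (simp add: j U_def)
      then show ?thesis
        unfolding odd_term even_term ecoef_eq by (simp only: distrib_left distrib_right ac_simps)
    qed
    have "f 0 = 2 * u ^ (s + 1)"
      by (simp add: f_def)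
    then show ?thesis
      using pair by (simp add: sum_distrib_left)
  qed
  finally show ?thesis
    by (simp only: v_def)
qed

definition delannoy_moment :: "int \<Rightarrow> int \<Rightarrow> nat \<Rightarrow> nat \<Rightarrow> int" where
  "delannoy_moment \<sigma> z n w = (\<Sum>k<n. \<sigma> ^ k * (2 * int k + 1) ^ (2 * w) * delannoy k z)"

lemma signed_odd_powers_three_term:
  fixes \<sigma> t z :: int and k m :: nat
  assumes sign: "\<sigma>\<^sup>2 = 1" and t: "\<sigma> * (2 * z + 1) = 2 * t + 1"
    and h_def: "\<And>k. h k = \<sigma> ^ k * (2 * int k + 1) ^ (2 * m + 1)"
  shows "int k * h (k - 1) + int (k + 1) * h (k + 1) - int (2 * k + 1) * (2 * z + 1) * h k
     = 2 * \<sigma> ^ (k + 1) * ((\<Sum>j=1..m + 1. ecoef (2 * m + 1) j * (2 * int k + 1) ^ (2 * (m + 1 - j)))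
                           - t * (2 * int k + 1) ^ (2 * (m + 1)))"
proof -
  define u where "u = 2 * int k + 1"
  define s where "s = 2 * m + 1"
  have left: "2 * (int k * h (k - 1)) = \<sigma> ^ (k + 1) * ((u - 1) * (u - 2) ^ s)"
  proof (cases k)
    case (Suc i)
    have "\<sigma> ^ (k + 1) = \<sigma> ^ i * \<sigma>\<^sup>2"
      using Suc by (simp flip: power_add)
    then have sigma: "\<sigma> ^ (k + 1) = \<sigma> ^ i"
      using sign by simp
    show ?thesis
      unfolding sigma using Suc by (simp add: h_def u_def s_def algebra_simps)
  qed (simp add: u_def)
  have right: "2 * (int (k + 1) * h (k + 1)) = \<sigma> ^ (k + 1) * ((u + 1) * (u + 2) ^ s)"
    by (simp add: h_def u_def s_def algebra_simps)
  have "\<sigma> ^ k * (2 * z + 1) = \<sigma> ^ k * \<sigma>\<^sup>2 * (2 * z + 1)"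
    using sign by simp
  also have "\<dots> = \<sigma> ^ (k + 1) * (2 * t + 1)"
    by (simp add: power2_eq_square flip: t)
  finally have sigma: "\<sigma> ^ k * (2 * z + 1) = \<sigma> ^ (k + 1) * (2 * t + 1)" .
  have "int (2 * k + 1) * (2 * z + 1) * h k = \<sigma> ^ k * (2 * z + 1) * u ^ (s + 1)"
    by (simp add: h_def u_def s_def algebra_simps)
  then have middle: "int (2 * k + 1) * (2 * z + 1) * h k = \<sigma> ^ (k + 1) * (2 * t + 1) * u ^ (s + 1)"
    unfolding sigma .
  have binomial: "(u - 1) * (u - 2) ^ s + (u + 1) * (u + 2) ^ s
      = 2 * u ^ (s + 1) + 4 * (\<Sum>j=1..m + 1. ecoef (2 * m + 1) j * u ^ (2 * (m + 1 - j)))"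
  proof -
    have "(s + 1) div 2 = m + 1" "\<And>j. s + 1 - 2 * j = 2 * (m + 1 - j)"
      by (simp_all add: s_def)
    then show ?thesis
      using shifted_binomial_sum[of u s] by (simp add: s_def)
  qed
  have "2 * (int k * h (k - 1) + int (k + 1) * h (k + 1) - int (2 * k + 1) * (2 * z + 1) * h k)
      = 2 * (int k * h (k - 1)) + 2 * (int (k + 1) * h (k + 1))
        - 2 * (int (2 * k + 1) * (2 * z + 1) * h k)"
    by (simp add: algebra_simps)
  also have "\<dots> = \<sigma> ^ (k + 1) * ((u - 1) * (u - 2) ^ s + (u + 1) * (u + 2) ^ s - 2 * (2 * t + 1) * u ^ (s + 1))"
    unfolding left right middle by (simp add: algebra_simps)
  also have "\<dots> = 2 * (2 * \<sigma> ^ (k + 1) * ((\<Sum>j=1..m + 1. ecoef (2 * m + 1) j * u ^ (2 * (m + 1 - j)))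
                                           - t * u ^ (2 * (m + 1))))"
    unfolding binomial by (simp add: s_def algebra_simps)
  finally show ?thesis
    by (simp add: u_def)
qed

lemma delannoy_moment_lincomb:
  "(\<Sum>j\<in>J. a j * delannoy_moment \<sigma> z n (w j))
     = (\<Sum>k<n. \<sigma> ^ k * (\<Sum>j\<in>J. a j * (2 * int k + 1) ^ (2 * w j)) * delannoy k z)"
proof -
  have "(\<Sum>j\<in>J. a j * delannoy_moment \<sigma> z n (w j))
      = (\<Sum>j\<in>J. \<Sum>k<n. a j * (\<sigma> ^ k * (2 * int k + 1) ^ (2 * w j) * delannoy k z))"
    by (simp only: delannoy_moment_def sum_distrib_left)
  also have "\<dots> = (\<Sum>k<n. \<Sum>j\<in>J. a j * (\<sigma> ^ k * (2 * int k + 1) ^ (2 * w j) * delannoy k z))"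
    by (rule sum.swap)
  also have "\<dots> = (\<Sum>k<n. \<sigma> ^ k * (\<Sum>j\<in>J. a j * (2 * int k + 1) ^ (2 * w j)) * delannoy k z)"
    unfolding sum_distrib_left sum_distrib_right by (intro sum.cong refl) (simp add: ac_simps)
  finally show ?thesis .
qed

lemma delannoy_moment_rec_cong:
  fixes \<sigma> t z :: int
  assumes sign: "\<sigma>\<^sup>2 = 1" and t: "\<sigma> * (2 * z + 1) = 2 * t + 1" and "odd n"
  shows "[t * delannoy_moment \<sigma> z n (Suc m)
          = (\<Sum>j=1..Suc m. ecoef (2 * Suc m - 1) j * delannoy_moment \<sigma> z n (Suc m - j))] (mod int n)"
proof -
  let ?M = "delannoy_moment \<sigma> z n"
  let ?e = "\<lambda>j. ecoef (2 * m + 1) j"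
  define h where "h k = \<sigma> ^ k * (2 * int k + 1) ^ (2 * m + 1)" for k
  define E where "E k = (\<Sum>j=1..m + 1. ?e j * (2 * int k + 1) ^ (2 * (m + 1 - j)))" for k
  define X where "X = (\<Sum>j=1..m + 1. ?e j * ?M (m + 1 - j)) - t * ?M (m + 1)"
  have "(\<Sum>k<n. delannoy k z
          * (int k * h (k - 1) + int (k + 1) * h (k + 1) - int (2 * k + 1) * (2 * z + 1) * h k))
      = int n * (h n * delannoy (n - 1) z - h (n - 1) * delannoy n z)"
    by (rule three_term_recurrence_summation[where d = "\<lambda>k. delannoy k z"]) (rule delannoy_rec)
  moreover have "(\<Sum>k<n. delannoy k z
          * (int k * h (k - 1) + int (k + 1) * h (k + 1) - int (2 * k + 1) * (2 * z + 1) * h k))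
      = (\<Sum>k<n. 2 * \<sigma> * (\<sigma> ^ k * E k * delannoy k z)
                 - 2 * \<sigma> * t * (\<sigma> ^ k * (2 * int k + 1) ^ (2 * (m + 1)) * delannoy k z))"
    unfolding signed_odd_powers_three_term[OF sign t h_def] E_def[symmetric]
    by (intro sum.cong refl) (simp add: algebra_simps)
  moreover have "\<dots> = 2 * \<sigma> * X"
    unfolding X_def E_def delannoy_moment_lincomb[where a = ?e and w = "\<lambda>j. m + 1 - j"]
    by (simp only: sum_subtractf sum_distrib_left delannoy_moment_def right_diff_distrib mult.assoc)
  ultimately have "int n dvd \<sigma> * (2 * \<sigma> * X)"
    by (metis dvd_mult dvd_triv_left)
  moreover have "\<sigma> * (2 * \<sigma> * X) = \<sigma>\<^sup>2 * (2 * X)"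
    by (simp add: power2_eq_square ac_simps)
  ultimately have "int n dvd 2 * X"
    using sign by simp
  then have "int n dvd X"
    using \<open>odd n\<close> by (simp add: coprime_dvd_mult_right_iff)
  then show ?thesis
    by (simp add: X_def cong_iff_dvd_diff dvd_diff_commute)
qed

fun cseq_num :: "'a::comm_ring_1 \<Rightarrow> nat \<Rightarrow> 'a" where
  "cseq_num t 0 = 1"
| "cseq_num t (Suc m) =
     (\<Sum>j=1..Suc m. of_int (ecoef (2 * Suc m - 1) j) * t ^ (j - 1) * cseq_num t (Suc m - j))"

lemma cong_cseq_num:
  fixes M :: "nat \<Rightarrow> int"
  assumes rec: "\<And>m. [t * M (Suc m) = (\<Sum>j=1..Suc m. ecoef (2 * Suc m - 1) j * M (Suc m - j))] (mod q)"
  shows "[t ^ v * M v = cseq_num t v * M 0] (mod q)"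
proof (induction v rule: less_induct)
  case (less v)
  show ?case
  proof (cases v)
    case (Suc m)
    let ?e = "\<lambda>j. ecoef (2 * Suc m - 1) j"
    let ?S = "\<lambda>j. ?e j * t ^ (j - 1)"
    have "[t ^ Suc m * M (Suc m) = t ^ m * (\<Sum>j=1..Suc m. ?e j * M (Suc m - j))] (mod q)"
      using cong_mult[OF cong_refl rec, of "t ^ m" m] by (simp add: ac_simps)
    also have "t ^ m * (\<Sum>j=1..Suc m. ?e j * M (Suc m - j))
        = (\<Sum>j=1..Suc m. ?S j * (t ^ (Suc m - j) * M (Suc m - j)))"
      unfolding sum_distrib_left
    proof (intro sum.cong refl)
      fix j assume "j \<in> {1..Suc m}"
      then have "t ^ m = t ^ (j - 1) * t ^ (Suc m - j)"
        by (simp flip: power_add)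
      then show "t ^ m * (?e j * M (Suc m - j)) = ?S j * (t ^ (Suc m - j) * M (Suc m - j))"
        by (simp add: ac_simps)
    qed
    also have "[(\<Sum>j=1..Suc m. ?S j * (t ^ (Suc m - j) * M (Suc m - j)))
              = (\<Sum>j=1..Suc m. ?S j * (cseq_num t (Suc m - j) * M 0))] (mod q)"
    proof (rule cong_sum)
      fix j assume "j \<in> {1..Suc m}"
      then have "Suc m - j < v"
        using Suc by auto
      then show "[?S j * (t ^ (Suc m - j) * M (Suc m - j)) = ?S j * (cseq_num t (Suc m - j) * M 0)] (mod q)"
        by (rule cong_mult[OF cong_refl less.IH])
    qed
    also have "(\<Sum>j=1..Suc m. ?S j * (cseq_num t (Suc m - j) * M 0)) = cseq_num t (Suc m) * M 0"
      by (simp only: cseq_num.simps sum_distrib_right of_int_eq_id id_apply mult.assoc)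
    finally show ?thesis
      using Suc by simp
  qed simp
qed

lemma cseq_eq_cseq_num:
  fixes t :: rat
  assumes "t \<noteq> 0"
  shows "cseq t v = cseq_num t v / t ^ v"
proof (induction v rule: less_induct)
  case (less v)
  show ?case
  proof (cases v)
    case (Suc m)
    let ?e = "\<lambda>j. of_int (ecoef (2 * Suc m - 1) j) :: rat"
    have "cseq t (Suc m) = (\<Sum>j=1..Suc m. 1 / t * (?e j * cseq t (Suc m - j)))"
      by (simp only: cseq.simps sum_distrib_left)
    also have "\<dots> = (\<Sum>j=1..Suc m. ?e j * t ^ (j - 1) * cseq_num t (Suc m - j) / t ^ Suc m)"
    proof (intro sum.cong refl)
      fix j assume "j \<in> {1..Suc m}"
      then have "Suc m - j < v" and "t ^ Suc m = t * t ^ (j - 1) * t ^ (Suc m - j)"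
        using Suc by (auto simp flip: power_add)
      then show "1 / t * (?e j * cseq t (Suc m - j))
          = ?e j * t ^ (j - 1) * cseq_num t (Suc m - j) / t ^ Suc m"
        using assms by (simp add: less.IH field_simps)
    qed
    also have "\<dots> = cseq_num t (Suc m) / t ^ Suc m"
      by (simp only: cseq_num.simps sum_divide_distrib)
    finally show ?thesis
      using Suc by simp
  qed simp
qed

lemma ctseq_eq_cseq: "ctseq x v = cseq (- (x + 1)) v"
proof (induction v rule: less_induct)
  case (less v)
  have "- x - 1 = - (x + 1)"
    by simp
  then have "a / (- x - 1) = - (a / (x + 1))" for a
    by (simp only: divide_minus_right)
  with less show ?case
    by (cases v) (simp_all cong: sum.cong_simp)
qed

lemma of_int_cseq_num: "cseq_num (of_int t) v = of_int (cseq_num t v)"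
proof (induction v rule: less_induct)
  case (less v)
  then show ?case
    by (cases v) (simp_all cong: sum.cong_simp)
qed

lemma poly_cseq_num: "poly (cseq_num p v) x = cseq_num (poly p x) v"
proof (induction v rule: less_induct)
  case (less v)
  then show ?case
    by (cases v) (simp_all add: poly_sum cong: sum.cong_simp)
qed

lemma map_poly_of_int_add:
  "map_poly (of_int :: int \<Rightarrow> 'a::comm_ring_1) (p + q) = map_poly of_int p + map_poly of_int q"
  by (rule poly_eqI) (simp add: coeff_map_poly)

lemma map_poly_of_int_mult:
  "map_poly (of_int :: int \<Rightarrow> 'a::comm_ring_1) (p * q) = map_poly of_int p * map_poly of_int q"
  by (rule poly_eqI) (simp add: coeff_map_poly coeff_mult)

lemma map_poly_of_int_cseq_num:
  "map_poly (of_int :: int \<Rightarrow> 'a::comm_ring_1) (cseq_num p v) = cseq_num (map_poly of_int p) v"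
proof -
  have map_sum: "map_poly (of_int :: int \<Rightarrow> 'a) (\<Sum>j\<in>A. f j) = (\<Sum>j\<in>A. map_poly of_int (f j))"
    for A :: "nat set" and f
    by (induction A rule: infinite_finite_induct) (simp_all add: map_poly_of_int_add)
  have map_power: "map_poly (of_int :: int \<Rightarrow> 'a) (p ^ k) = map_poly of_int p ^ k" for k
    by (induction k) (simp_all add: map_poly_of_int_mult)
  have map_of_int: "map_poly (of_int :: int \<Rightarrow> 'a) (of_int c) = of_int c" for c
    by (simp add: of_int_poly map_poly_pCons)
  show ?thesis
  proof (induction v rule: less_induct)
    case (less v)
    show ?case
    proof (cases v)
      case (Suc m)
      have "map_poly of_int (cseq_num p (Suc m))
          = (\<Sum>j=1..Suc m. of_int (ecoef (2 * Suc m - 1) j) * map_poly of_int p ^ (j - 1)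
                             * (map_poly of_int (cseq_num p (Suc m - j)) :: 'a poly))"
        by (simp only: cseq_num.simps map_sum map_poly_of_int_mult map_power map_of_int)
      also have "\<dots> = cseq_num (map_poly of_int p) (Suc m)"
        unfolding cseq_num.simps using Suc by (intro sum.cong refl arg_cong[where f = "(*) _"] less.IH) auto
      finally show ?thesis
        using Suc by simp
    qed simp
  qed
qed

lemma cseq_int_poly:
  "\<exists>P :: int poly. \<forall>x :: rat. x \<noteq> 0 \<longrightarrow> cseq x v = poly (map_poly of_int P) x / x ^ v"
proof (intro exI allI impI)
  fix x :: rat
  assume "x \<noteq> 0"
  then show "cseq x v = poly (map_poly of_int (cseq_num [:0, 1:] v)) x / x ^ v"
    by (simp add: cseq_eq_cseq_num map_poly_of_int_cseq_num poly_cseq_num map_poly_pCons)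
qed

lemma ctseq_int_poly:
  "\<exists>P :: int poly. \<forall>x :: rat. x \<noteq> -1 \<longrightarrow> ctseq x v = poly (map_poly of_int P) x / (x + 1) ^ v"
proof (intro exI allI impI)
  fix x :: rat
  assume "x \<noteq> -1"
  then have "- (x + 1) \<noteq> 0"
    by (simp add: add_eq_0_iff)
  then have "ctseq x v = cseq_num (- (x + 1)) v / (- (x + 1)) ^ v"
    by (simp add: ctseq_eq_cseq cseq_eq_cseq_num)
  also have "\<dots> = (-1) ^ v * cseq_num (- (x + 1)) v / (x + 1) ^ v"
    unfolding power_minus[of "x + 1"] by (cases "even v") simp_all
  also have "\<dots> = poly (map_poly of_int (Polynomial.smult ((-1) ^ v) (cseq_num [:-1, -1:] v))) x / (x + 1) ^ v"
  proof -
    have "poly (map_poly of_int [:-1, -1:]) x = - (x + 1)"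
      by (simp add: map_poly_pCons)
    then show ?thesis
      unfolding map_poly_smult[of of_int, OF of_int_0 of_int_mult] poly_smult
        map_poly_of_int_cseq_num poly_cseq_num
      by simp
  qed
  finally show "ctseq x v = poly (map_poly of_int (Polynomial.smult ((-1) ^ v) (cseq_num [:-1, -1:] v))) x / (x + 1) ^ v" .
qed

lemma rat_cong_of_cong:
  fixes t a b c q :: int
  assumes "t \<noteq> 0" and "coprime t q" and "[t ^ v * a = c * b] (mod q)"
  shows "rat_cong (of_int a) (of_int c / of_int t ^ v * of_int b) q"
  unfolding rat_cong_def
proof (intro exI conjI)
  show "coprime (t ^ v) q"
    using assms(2) by simp
  show "of_int (t ^ v) * (of_int a - of_int c / of_int t ^ v * of_int b) = (of_int (t ^ v * a - c * b) :: rat)"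
    using assms(1) by (simp add: field_simps)
  show "q dvd t ^ v * a - c * b"
    using assms(3) by (simp add: cong_iff_dvd_diff)
qed

lemma delannoy_moment_rat_cong:
  fixes \<sigma> t z :: int
  assumes "\<sigma>\<^sup>2 = 1" and "\<sigma> * (2 * z + 1) = 2 * t + 1" and "t \<noteq> 0" and "coprime (int n) (2 * t)"
  shows "rat_cong (of_int (delannoy_moment \<sigma> z n v))
                  (cseq (of_int t) v * of_int (delannoy_moment \<sigma> z n 0)) (int n)"
proof -
  from assms(4) have "odd n" and "coprime t (int n)"
    by (simp_all add: coprime_commute)
  have "[t ^ v * delannoy_moment \<sigma> z n v = cseq_num t v * delannoy_moment \<sigma> z n 0] (mod int n)"
    by (rule cong_cseq_num) (rule delannoy_moment_rec_cong[OF assms(1,2) \<open>odd n\<close>])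
  from rat_cong_of_cong[OF \<open>t \<noteq> 0\<close> \<open>coprime t (int n)\<close> this] show ?thesis
    using \<open>t \<noteq> 0\<close> by (simp add: cseq_eq_cseq_num of_int_cseq_num)
qed

theorem theorem1p1:
  fixes n v :: nat and z :: int
  assumes "n > 0" and "z \<noteq> 0" and "z \<noteq> -1"
  shows "(\<exists>P :: int poly. \<forall>x :: rat. x \<noteq> 0 \<longrightarrow>
            cseq x v = poly (map_poly of_int P) x / x ^ v)
       \<and> (\<exists>P :: int poly. \<forall>x :: rat. x \<noteq> -1 \<longrightarrow>
            ctseq x v = poly (map_poly of_int P) x / (x + 1) ^ v)
       \<and> (coprime (int n) (2 * z) \<longrightarrow>
            rat_cong (of_int (\<Sum>k<n. (2 * int k + 1) ^ (2 * v) * delannoy k z))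
                     (cseq (of_int z) v * of_int (\<Sum>k<n. delannoy k z)) (int n))
       \<and> (coprime (int n) (2 * (z + 1)) \<longrightarrow>
            rat_cong (of_int (\<Sum>k<n. (-1) ^ k * (2 * int k + 1) ^ (2 * v) * delannoy k z))
                     (ctseq (of_int z) v * of_int (\<Sum>k<n. (-1) ^ k * delannoy k z)) (int n))"
proof (intro conjI impI cseq_int_poly ctseq_int_poly)
  assume "coprime (int n) (2 * z)"
  with delannoy_moment_rat_cong[of 1 z z n v] \<open>z \<noteq> 0\<close>
  show "rat_cong (of_int (\<Sum>k<n. (2 * int k + 1) ^ (2 * v) * delannoy k z))
                 (cseq (of_int z) v * of_int (\<Sum>k<n. delannoy k z)) (int n)"
    by (simp add: delannoy_moment_def)
next
  assume "coprime (int n) (2 * (z + 1))"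
  then have "coprime (int n) (2 * - (z + 1))"
    by (simp only: mult_minus_right coprime_minus_right_iff)
  with delannoy_moment_rat_cong[of "-1" z "- (z + 1)" n v] \<open>z \<noteq> -1\<close>
  show "rat_cong (of_int (\<Sum>k<n. (-1) ^ k * (2 * int k + 1) ^ (2 * v) * delannoy k z))
                 (ctseq (of_int z) v * of_int (\<Sum>k<n. (-1) ^ k * delannoy k z)) (int n)"
    by (simp add: delannoy_moment_def ctseq_eq_cseq)
qed

end
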